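(* Let $(M,\omega,\mathbb{T}^n,\mu)$ be a compact toric symplectic manifold of dimension $2n$ with moment polytope $P$, let $\tau$ be the symplectic potential on $\mathring{P}$ of a compatible toric K\"ahler structure, let $\phi_s=(\partial^2\tau/\partial\mu_i\partial\mu_j)$ be its Hessian, and let $F$ be a constant real antisymmetric $n\times n$ matrix such that $\mathrm{I}+\frac14[(\phi_s)^{-1/2}F(\phi_s)^{-1/2}]^2$ is positive definite. Put $\Xi=\phi_s+\frac14F(\phi_s)^{-1}F$. Then on $\mathring{P}$ \[-\sum_{i,j}\frac{\partial^2(\Xi^{-1})_{ij}}{\partial\mu_i\partial\mu_j}=\sum_{i,j}\frac{\partial}{\partial\mu_i}\Big[\Big(\frac{\partial}{\partial\mu_j}\log\det(\phi_s\Xi)^{1/2}\Big)(\Xi^{-1})_{ij}\Big].\] In words: for toric generalized K\"ahler manifolds of symplectic type, Boulanger's scalar curvature (the left side) equals Goto's scalar curvature (the right side).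
   Context: $\mathring{P}$ is the interior of the moment polytope $P=\mu(M)$; $\mu=(\mu_1,\dots,\mu_n)$ is the moment map; $\tau$ is a smooth strictly convex function on $\mathring P$ (Guillemin's symplectic potential of a $\mathbb{T}$-invariant K\"ahler structure compatible with $\omega$). $\mathrm{I}$ is the identity matrix. The matrix $F$ together with $\tau$ (and an arbitrary constant antisymmetric matrix $C$) parametrizes a toric generalized K\"ahler structure of symplectic type on $M$. In this setting the left side is the scalar curvature obtained from Boulanger's moment map formalism, and the right side is the scalar curvature obtained from Goto's generalized Ricci form. *)

theory Defs
  imports "HOL-Analysis.Analysis"
begin

definition pd :: "'n::finite \<Rightarrow> (real^'n \<Rightarrow> real) \<Rightarrow> real^'n \<Rightarrow> real" where
  "pd i f = (\<lambda>x. frechet_derivative f (at x) (axis i 1))"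

fun iter_pd :: "'n::finite list \<Rightarrow> (real^'n \<Rightarrow> real) \<Rightarrow> real^'n \<Rightarrow> real" where
  "iter_pd [] f = f"
| "iter_pd (i # is) f = pd i (iter_pd is f)"

definition smooth_on :: "(real^'n::finite \<Rightarrow> real) \<Rightarrow> (real^'n) set \<Rightarrow> bool" where
  "smooth_on f U \<longleftrightarrow> (\<forall>is. iter_pd is f differentiable_on U)"

definition strictly_convex_on :: "'a::real_vector set \<Rightarrow> ('a \<Rightarrow> real) \<Rightarrow> bool" where
  "strictly_convex_on S f \<longleftrightarrow> convex S \<and>
     (\<forall>x\<in>S. \<forall>y\<in>S. \<forall>t::real. x \<noteq> y \<and> 0 < t \<and> t < 1 \<longrightarrow>
        f ((1 - t) *\<^sub>R x + t *\<^sub>R y) < (1 - t) * f x + t * f y)"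

definition hessian :: "(real^'n::finite \<Rightarrow> real) \<Rightarrow> real^'n \<Rightarrow> real^'n^'n" where
  "hessian f x = (\<chi> i j. pd i (pd j f) x)"

definition pos_def :: "real^'n::finite^'n \<Rightarrow> bool" where
  "pos_def A \<longleftrightarrow> transpose A = A \<and> (\<forall>v. v \<noteq> 0 \<longrightarrow> v \<bullet> (A *v v) > 0)"

definition msqrt :: "real^'n::finite^'n \<Rightarrow> real^'n^'n" where
  "msqrt A = (THE B. pos_def B \<and> B ** B = A)"

definition Xi :: "real^'n::finite^'n \<Rightarrow> real^'n^'n \<Rightarrow> real^'n^'n" where
  "Xi phi F = phi + (1/4::real) *\<^sub>R (F ** matrix_inv phi ** F)"

end

theory Submission
  imports Defs
begin

(* Write G for the Hessian phi_s of tau, K = G^-1, W = Xi^-1 and T_j = d_j G for the matrix of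
   third derivatives of tau, which is totally symmetric by Schwarz's theorem.  Then
   d_j Xi = T_j - 1/4 F K T_j K F and d_j W = - W (d_j Xi) W, while Jacobi's formula gives
   d_j log det (G Xi)^(1/2) = trace (W T_j).  Hence both sides of the identity are
   sum_i d_i R_i with R_i = sum_j trace (W T_j) W_ij, once the pointwise identity
   sum_j d_j W_ij = - R_i is known.  That identity is linear algebra: F K Xi = Xi K F, so
   W F K = K F W and K = W + 1/4 K F W F K; moreover the totally symmetric T contracts to zero
   against the antisymmetric K F W.  The positivity hypothesis enters only through
   Xi = G^(1/2) M G^(1/2) with M positive definite, which makes Xi invertible and
   det (G Xi) > 0. *)

section \<open>Matrix algebra\<close>

lemma matrix_inv_right:
  assumes "invertible A"
  shows "A ** matrix_inv A = mat 1"
  using someI_ex[OF assms[unfolded invertible_def]] unfolding matrix_inv_def by blast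

lemma matrix_inv_left:
  assumes "invertible A"
  shows "matrix_inv A ** A = mat 1"
  using someI_ex[OF assms[unfolded invertible_def]] unfolding matrix_inv_def by blast

lemma matrix_inv_unique:
  fixes A B :: "'a::field^'n^'n"
  assumes "A ** B = mat 1"
  shows "matrix_inv A = B"
proof -
  have "invertible A" using assms invertible_right_inverse by blast
  have "matrix_inv A = matrix_inv A ** (A ** B)" using assms by simp
  also have "\<dots> = B" by (simp add: matrix_mul_assoc matrix_inv_left[OF \<open>invertible A\<close>])
  finally show ?thesis .
qed

lemma matrix_inv_mult:
  fixes A B :: "'a::field^'n^'n"
  assumes "invertible A" "invertible B"
  shows "matrix_inv (A ** B) = matrix_inv B ** matrix_inv A"
proof (rule matrix_inv_unique)
  have "A ** B ** (matrix_inv B ** matrix_inv A) = A ** (B ** matrix_inv B) ** matrix_inv A"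
    by (simp add: matrix_mul_assoc)
  then show "A ** B ** (matrix_inv B ** matrix_inv A) = mat 1"
    by (simp add: matrix_inv_right assms)
qed

lemma symmetric_matrix_inv:
  fixes A :: "'a::field^'n^'n"
  assumes "invertible A" "transpose A = A"
  shows "transpose (matrix_inv A) = matrix_inv A"
proof -
  have "A ** transpose (matrix_inv A) = transpose (matrix_inv A ** A)"
    by (simp add: matrix_transpose_mul assms(2))
  also have "\<dots> = mat 1"
    by (simp add: matrix_inv_left assms(1))
  finally show ?thesis by (rule matrix_inv_unique[symmetric])
qed

lemma matrix_add_rdistrib: "(A + B) ** C = A ** C + B ** (C :: 'a::semiring_1^'n^'m)"
  by (simp add: vec_eq_iff matrix_matrix_mult_def sum.distrib distrib_right)

lemma matrix_diff_ldistrib: "A ** (B - C) = A ** B - A ** (C :: 'a::ring_1^'n^'m)"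
  by (simp add: vec_eq_iff matrix_matrix_mult_def sum_subtractf right_diff_distrib)

lemma matrix_diff_rdistrib: "(A - B) ** C = A ** C - B ** (C :: 'a::ring_1^'n^'m)"
  by (simp add: vec_eq_iff matrix_matrix_mult_def sum_subtractf left_diff_distrib)

lemma matrix_mul_minus_left: "(- A) ** B = - (A ** (B :: 'a::ring_1^'n^'m))"
  by (simp add: vec_eq_iff matrix_matrix_mult_def sum_negf)

lemma matrix_mul_minus_right: "A ** (- B) = - (A ** (B :: 'a::ring_1^'n^'m))"
  by (simp add: vec_eq_iff matrix_matrix_mult_def sum_negf)

lemma transpose_add: "transpose (A + B) = transpose A + transpose (B :: 'a::semiring_1^'n^'m)"
  by (simp add: vec_eq_iff transpose_def)

lemma trace_scaleR: "trace (c *\<^sub>R A) = c * trace (A :: real^'n^'n)"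
  by (simp add: trace_def sum_distrib_left)

lemma symmetric_matrix_inner:
  fixes A :: "real^'n::finite^'n"
  assumes "transpose A = A"
  shows "u \<bullet> (A *v v) = (A *v u) \<bullet> v"
proof -
  have "u \<bullet> (A *v v) = (u v* A) \<bullet> v" by (simp add: dot_lmul_matrix)
  also have "\<dots> = (transpose A *v u) \<bullet> v" by simp
  finally show ?thesis using assms by simp
qed

section \<open>Positive definite matrices and their square roots\<close>

lemma pos_def_invertible:
  assumes "pos_def A"
  shows "invertible A"
proof -
  have "\<forall>x. A *v x = 0 \<longrightarrow> x = 0"
    using assms unfolding pos_def_def by (metis inner_zero_right less_irrefl)
  then show ?thesis using matrix_left_invertible_ker invertible_left_inverse by blast
qed

lemma quadratic_nonpos_imp_linear_coeff_zero:
  fixes a b :: real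
  assumes "\<And>t. b * t + a * t^2 \<le> 0"
  shows "b = 0"
proof (rule ccontr)
  assume "b \<noteq> 0"
  define s where "s = 1 / (\<bar>a\<bar> + 1)"
  have "0 < s" by (simp add: s_def add_pos_nonneg)
  have "\<bar>s * a\<bar> < 1" by (simp add: s_def abs_mult)
  then have "0 < 1 + s * a" by linarith
  moreover have "0 < s * b^2" using \<open>b \<noteq> 0\<close> \<open>0 < s\<close> by simp
  ultimately have "0 < s * b^2 * (1 + s * a)" by simp
  moreover have "s * b^2 * (1 + s * a) \<le> 0"
    using assms[of "s * b"] by (simp add: power2_eq_square algebra_simps)
  ultimately show False by linarith
qed

text \<open>Along any direction w orthogonal to the maximiser u the Rayleigh quotient is stationary,
  which forces w \<bullet> (A *v u) = 0.\<close>
lemma rayleigh_maximizer_eigenvector: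
  fixes A :: "real^'n::finite^'n"
  assumes sym: "transpose A = A" and V: "subspace V" and inv: "\<forall>v\<in>V. A *v v \<in> V"
    and uV: "u \<in> V" and uu: "u \<bullet> u = 1"
    and max: "\<And>z. z \<in> V \<Longrightarrow> z \<bullet> (A *v z) \<le> (u \<bullet> (A *v u)) * (z \<bullet> z)"
  shows "A *v u = (u \<bullet> (A *v u)) *\<^sub>R u"
proof -
  define lam where "lam = u \<bullet> (A *v u)"
  have orth: "w \<bullet> (A *v u) = 0" if wV: "w \<in> V" and wu: "w \<bullet> u = 0" for w
  proof -
    define c where "c = w \<bullet> (A *v u)"
    have "2 * c = 0"
    proof (rule quadratic_nonpos_imp_linear_coeff_zero)
      fix t :: real
      have "u + t *\<^sub>R w \<in> V" using uV wV V by (simp add: subspace_add subspace_scale)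
      note bound = max[OF this]
      have "u \<bullet> (A *v w) = c"
        using symmetric_matrix_inner[OF sym, of u w] by (simp add: c_def inner_commute)
      then have "(u + t *\<^sub>R w) \<bullet> (A *v (u + t *\<^sub>R w)) = lam + 2 * c * t + (w \<bullet> (A *v w)) * t^2"
        by (simp add: lam_def c_def matrix_vector_right_distrib matrix_vector_mult_scaleR
            inner_add_left inner_add_right power2_eq_square) (simp add: algebra_simps)
      moreover have "(u + t *\<^sub>R w) \<bullet> (u + t *\<^sub>R w) = 1 + t^2 * (w \<bullet> w)"
        using uu wu by (simp add: inner_add_left inner_add_right inner_commute power2_eq_square)
      ultimately show "2 * c * t + (w \<bullet> (A *v w) - lam * (w \<bullet> w)) * t^2 \<le> 0"
        using bound by (simp add: lam_def algebra_simps)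
    qed
    then show ?thesis by (simp add: c_def)
  qed
  define r where "r = A *v u - lam *\<^sub>R u"
  have "r \<in> V" unfolding r_def using inv uV V by (simp add: subspace_diff subspace_scale)
  moreover have ru: "r \<bullet> u = 0" unfolding r_def using uu
    by (simp add: inner_diff_left inner_diff_right lam_def inner_commute)
  ultimately have "r \<bullet> (A *v u) = 0" by (rule orth)
  moreover have "r \<bullet> r = r \<bullet> (A *v u) - lam * (r \<bullet> u)"
    by (metis r_def inner_diff_right inner_scaleR_right)
  ultimately have "r = 0" using ru by simp
  then show ?thesis by (simp add: r_def lam_def)
qed

lemma symmetric_matrix_eigenvector_in_subspace:
  fixes A :: "real^'n::finite^'n"
  assumes sym: "transpose A = A" and V: "subspace V" and nz: "V \<noteq> {0}"
    and inv: "\<forall>v\<in>V. A *v v \<in> V"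
  shows "\<exists>u\<in>V. norm u = 1 \<and> A *v u = (u \<bullet> (A *v u)) *\<^sub>R u"
proof -
  define K where "K = V \<inter> sphere 0 1"
  have "compact K" unfolding K_def
    by (intro closed_Int_compact closed_subspace V compact_sphere)
  obtain v where v: "v \<in> V" "v \<noteq> 0" using nz V subspace_0 by blast
  then have "v /\<^sub>R norm v \<in> K" unfolding K_def using V by (simp add: subspace_scale)
  then have "K \<noteq> {}" by blast
  moreover have "continuous_on K (\<lambda>v. v \<bullet> (A *v v))" by (intro continuous_intros)
  ultimately obtain u where uK: "u \<in> K" and umax: "\<And>y. y \<in> K \<Longrightarrow> y \<bullet> (A *v y) \<le> u \<bullet> (A *v u)"
    using continuous_attains_sup[OF \<open>compact K\<close>] by blast
  have uV: "u \<in> V" and nu: "norm u = 1" using uK unfolding K_def by auto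
  have bound: "z \<bullet> (A *v z) \<le> (u \<bullet> (A *v u)) * (z \<bullet> z)" if "z \<in> V" for z
  proof (cases "z = 0")
    case False
    have "z \<bullet> (A *v z) / (z \<bullet> z) = (z /\<^sub>R norm z) \<bullet> (A *v (z /\<^sub>R norm z))"
      by (simp add: matrix_vector_mult_scaleR dot_square_norm power2_eq_square divide_inverse
          inverse_mult_distrib mult_ac)
    also have "\<dots> \<le> u \<bullet> (A *v u)"
      by (rule umax) (simp add: K_def that False V subspace_scale)
    finally show ?thesis using False by (simp add: pos_divide_le_eq)
  qed simp
  have "u \<bullet> u = 1" using nu by (simp add: dot_square_norm)
  from rayleigh_maximizer_eigenvector[OF sym V inv uV this bound] show ?thesis
    using uV nu by blast
qed

lemma symmetric_matrix_orthogonal_complement_invariant: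
  fixes A :: "real^'n::finite^'n"
  assumes sym: "transpose A = A" and inv: "\<forall>v\<in>V. A *v v \<in> V" and eu: "A *v u = c *\<^sub>R u"
  shows "\<forall>v\<in>{w \<in> V. w \<bullet> u = 0}. A *v v \<in> {w \<in> V. w \<bullet> u = 0}"
proof
  fix v assume "v \<in> {w \<in> V. w \<bullet> u = 0}"
  then have "v \<in> V" "v \<bullet> u = 0" by auto
  moreover have "(A *v v) \<bullet> u = v \<bullet> (A *v u)" using symmetric_matrix_inner[OF sym, of v u] by simp
  ultimately show "A *v v \<in> {w \<in> V. w \<bullet> u = 0}" using inv eu by simp
qed

lemma span_insert_orthogonal_complement:
  assumes V: "subspace V" and u: "u \<in> V" "u \<bullet> u = 1" and B: "span B = {w \<in> V. w \<bullet> u = 0}"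
  shows "span (insert u B) = V"
proof
  have "insert u B \<subseteq> V" using u B span_superset[of B] by auto
  then show "span (insert u B) \<subseteq> V" using V by (rule span_minimal)
  show "V \<subseteq> span (insert u B)"
  proof
    fix v assume "v \<in> V"
    then have "v - (v \<bullet> u) *\<^sub>R u \<in> span B"
      unfolding B using V u by (simp add: subspace_diff subspace_scale inner_diff_left)
    then have "v - (v \<bullet> u) *\<^sub>R u \<in> span (insert u B)" using span_mono[of B "insert u B"] by blast
    moreover have "(v \<bullet> u) *\<^sub>R u \<in> span (insert u B)" by (simp add: span_base span_scale)
    ultimately have "(v - (v \<bullet> u) *\<^sub>R u) + (v \<bullet> u) *\<^sub>R u \<in> span (insert u B)"
      by (rule span_add)
    then show "v \<in> span (insert u B)" by simp
  qed
qed

lemma symmetric_matrix_orthonormal_eigenbasis: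
  fixes A :: "real^'n::finite^'n"
  assumes sym: "transpose A = A" and "subspace V" and "\<forall>v\<in>V. A *v v \<in> V"
  shows "\<exists>B. finite B \<and> B \<subseteq> V \<and> span B = V \<and> pairwise orthogonal B \<and>
    (\<forall>b\<in>B. norm b = 1 \<and> A *v b = (b \<bullet> (A *v b)) *\<^sub>R b)"
  using assms(2,3)
proof (induction "dim V" arbitrary: V rule: less_induct)
  case less
  show ?case
  proof (cases "V = {0}")
    case True
    then show ?thesis by (intro exI[of _ "{}"]) auto
  next
    case False
    obtain u where uV: "u \<in> V" and nu: "norm u = 1" and eu: "A *v u = (u \<bullet> (A *v u)) *\<^sub>R u"
      using symmetric_matrix_eigenvector_in_subspace[OF sym less.prems(1) False less.prems(2)] by blast
    have uu: "u \<bullet> u = 1" using nu by (simp add: dot_square_norm)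
    define V' where "V' = {w \<in> V. w \<bullet> u = 0}"
    have sV': "subspace V'" unfolding V'_def subspace_def using less.prems(1)
      by (auto simp: subspace_0 subspace_add subspace_scale inner_add_left)
    have "u \<notin> V'" unfolding V'_def using uu by auto
    then have "V' \<subset> V" unfolding V'_def using uV by blast
    then have "dim V' < dim V"
      by (metis dim_psubset less.prems(1) sV' span_eq_iff)
    then obtain B' where B': "finite B'" "B' \<subseteq> V'" "span B' = V'" "pairwise orthogonal B'"
      "\<forall>b\<in>B'. norm b = 1 \<and> A *v b = (b \<bullet> (A *v b)) *\<^sub>R b"
      using less.hyps[OF _ sV'] symmetric_matrix_orthogonal_complement_invariant[OF sym less.prems(2) eu]
      unfolding V'_def by blast
    show ?thesis
    proof (intro exI[of _ "insert u B'"] conjI)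
      show "finite (insert u B')" using B'(1) by simp
      show "insert u B' \<subseteq> V" using B'(2) uV V'_def by auto
      show "span (insert u B') = V"
        by (rule span_insert_orthogonal_complement[OF less.prems(1) uV uu B'(3)[unfolded V'_def]])
      show "pairwise orthogonal (insert u B')"
        using B'(4) B'(2) unfolding pairwise_insert V'_def orthogonal_def by (auto simp: inner_commute)
      show "\<forall>b\<in>insert u B'. norm b = 1 \<and> A *v b = (b \<bullet> (A *v b)) *\<^sub>R b"
        using B'(5) nu eu by auto
    qed
  qed
qed

lemma matrix_eq_on_spanning_set:
  fixes M N :: "real^'n::finite^'m::finite"
  assumes "span B = UNIV" "\<And>b. b \<in> B \<Longrightarrow> M *v b = N *v b"
  shows "M = N"
proof -
  have "B \<subseteq> {x. M *v x = N *v x}" using assms(2) by blast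
  moreover have "subspace {x. M *v x = N *v x}"
    unfolding subspace_def by (simp add: matrix_vector_right_distrib matrix_vector_mult_scaleR)
  ultimately have "span B \<subseteq> {x. M *v x = N *v x}" by (rule span_minimal)
  then show ?thesis using assms(1) unfolding matrix_eq by auto
qed

lemma matrix_vector_mult_sum_rdistrib:
  fixes M :: "'b \<Rightarrow> real^'n::finite^'m::finite"
  shows "(\<Sum>b\<in>B. M b) *v v = (\<Sum>b\<in>B. M b *v v)"
  by (induction B rule: infinite_finite_induct) (auto simp: matrix_vector_mult_add_rdistrib)

lemma scaleR_matrix_vector_assoc: "(c *\<^sub>R M) *v v = c *\<^sub>R (M *v v :: real^'m::finite)"
  by (simp add: vec_eq_iff matrix_vector_mult_def sum_distrib_left mult.assoc)

definition outer_product :: "real^'n::finite \<Rightarrow> real^'n^'n" where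
  "outer_product b = (\<chi> i j. b$i * b$j)"

lemma outer_product_mult: "outer_product b *v v = (b \<bullet> v) *\<^sub>R b"
  by (simp add: vec_eq_iff outer_product_def matrix_vector_mult_def inner_vec_def sum_distrib_left
      sum_distrib_right mult.commute mult.left_commute)

lemma outer_product_sum_eigenvector:
  fixes s :: "real^'n::finite \<Rightarrow> real"
  assumes "finite B" "pairwise orthogonal B" "\<forall>b\<in>B. norm b = 1" "c \<in> B"
  shows "(\<Sum>b\<in>B. s b *\<^sub>R outer_product b) *v c = s c *\<^sub>R c"
proof -
  have "b \<bullet> c = (if b = c then 1 else 0)" if "b \<in> B" for b
    using assms(2-4) that unfolding pairwise_def orthogonal_def by (auto simp: dot_square_norm)
  then have "(\<Sum>b\<in>B. s b *\<^sub>R outer_product b) *v c = (\<Sum>b\<in>B. if b = c then s c *\<^sub>R c else 0)"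
    unfolding matrix_vector_mult_sum_rdistrib
    by (intro sum.cong) (auto simp: scaleR_matrix_vector_assoc outer_product_mult)
  then show ?thesis using assms(1,4) by simp
qed

lemma pos_def_outer_product_sum:
  fixes s :: "real^'n::finite \<Rightarrow> real"
  assumes "finite B" "span B = UNIV" "\<And>b. b \<in> B \<Longrightarrow> 0 < s b"
  shows "pos_def (\<Sum>b\<in>B. s b *\<^sub>R outer_product b)"
  unfolding pos_def_def
proof (intro conjI allI impI)
  show "transpose (\<Sum>b\<in>B. s b *\<^sub>R outer_product b) = (\<Sum>b\<in>B. s b *\<^sub>R outer_product b)"
    by (simp add: vec_eq_iff transpose_def sum_component outer_product_def mult.commute)
  fix v :: "real^'n" assume "v \<noteq> 0"
  have "\<exists>b\<in>B. b \<bullet> v \<noteq> 0"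
  proof (rule ccontr)
    assume "\<not> (\<exists>b\<in>B. b \<bullet> v \<noteq> 0)"
    then have "orthogonal v v"
      using orthogonal_to_span[of v B v] assms(2) by (auto simp: orthogonal_def inner_commute)
    then show False using \<open>v \<noteq> 0\<close> by (simp add: orthogonal_def)
  qed
  then obtain b where bB: "b \<in> B" and bv: "b \<bullet> v \<noteq> 0" by blast
  have "v \<bullet> ((\<Sum>b\<in>B. s b *\<^sub>R outer_product b) *v v) = (\<Sum>b\<in>B. s b * (b \<bullet> v)^2)"
    by (simp add: matrix_vector_mult_sum_rdistrib scaleR_matrix_vector_assoc outer_product_mult
        inner_sum_right power2_eq_square inner_commute mult.assoc)
  also have "\<dots> > 0"
  proof (rule sum_pos2[OF assms(1) bB])
    show "0 < s b * (b \<bullet> v)^2" using assms(3)[OF bB] bv by simp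
    show "0 \<le> s i * (i \<bullet> v)^2" if "i \<in> B" for i using assms(3)[OF that] by simp
  qed
  finally show "0 < v \<bullet> ((\<Sum>b\<in>B. s b *\<^sub>R outer_product b) *v v)" .
qed

lemma pos_def_sqrt_eigenvector:
  fixes A C :: "real^'n::finite^'n"
  assumes "pos_def C" "C ** C = A" "A *v b = (s * s) *\<^sub>R b" "0 < s"
  shows "C *v b = s *\<^sub>R b"
proof -
  define w where "w = C *v b - s *\<^sub>R b"
  have "C *v w + s *\<^sub>R w = (C ** C) *v b - (s * s) *\<^sub>R b"
    unfolding w_def by (simp add: matrix_vector_mul_assoc[symmetric] matrix_vector_right_distrib
        matrix_vector_mult_diff_distrib matrix_vector_mult_scaleR algebra_simps)
  also have "\<dots> = 0" using assms(2,3) by simp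
  finally have "C *v w = - (s *\<^sub>R w)" by (simp add: eq_neg_iff_add_eq_0)
  then have "w \<bullet> (C *v w) \<le> 0" using \<open>0 < s\<close> by simp
  then have "w = 0" using assms(1) unfolding pos_def_def by (meson not_le)
  then show ?thesis unfolding w_def by simp
qed

lemma pos_def_sqrt_ex1:
  fixes A :: "real^'n::finite^'n"
  assumes pd: "pos_def A"
  shows "\<exists>!R. pos_def R \<and> R ** R = A"
proof -
  have sym: "transpose A = A" using pd unfolding pos_def_def by auto
  obtain B where B: "finite B" "span B = UNIV" "pairwise orthogonal B"
    "\<forall>b\<in>B. norm b = 1 \<and> A *v b = (b \<bullet> (A *v b)) *\<^sub>R b"
    using symmetric_matrix_orthonormal_eigenbasis[OF sym, of UNIV] by auto
  define s where "s b = sqrt (b \<bullet> (A *v b))" for b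
  have spos: "0 < s b" if "b \<in> B" for b
  proof -
    have "b \<noteq> 0" using B(4) that by auto
    then show ?thesis using pd unfolding pos_def_def s_def by simp
  qed
  have Ab: "A *v b = (s b * s b) *\<^sub>R b" if "b \<in> B" for b
    using B(4) spos[OF that] that by (simp add: s_def)
  define R where "R = (\<Sum>b\<in>B. s b *\<^sub>R outer_product b)"
  have Rb: "R *v b = s b *\<^sub>R b" if "b \<in> B" for b
    unfolding R_def using B(1,3,4) that by (intro outer_product_sum_eigenvector) auto
  have "pos_def R" unfolding R_def using B(1,2) spos by (rule pos_def_outer_product_sum)
  moreover have "R ** R = A"
  proof (rule matrix_eq_on_spanning_set[OF B(2)])
    fix b assume "b \<in> B"
    then show "(R ** R) *v b = A *v b"
      by (simp add: matrix_vector_mul_assoc[symmetric] Rb Ab matrix_vector_mult_scaleR)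
  qed
  moreover have "C = R" if C: "pos_def C" "C ** C = A" for C
  proof (rule matrix_eq_on_spanning_set[OF B(2)])
    fix b assume "b \<in> B"
    then show "C *v b = R *v b"
      using pos_def_sqrt_eigenvector[OF C Ab spos] by (simp add: Rb)
  qed
  ultimately show ?thesis by blast
qed

lemma pos_def_msqrt: "pos_def A \<Longrightarrow> pos_def (msqrt A)"
  and msqrt_mult_self: "pos_def A \<Longrightarrow> msqrt A ** msqrt A = A"
  using theI'[OF pos_def_sqrt_ex1] unfolding msqrt_def by auto

lemma pos_def_det_pos:
  assumes "pos_def A"
  shows "0 < det A"
proof -
  have "det A = det (msqrt A) * det (msqrt A)"
    using msqrt_mult_self[OF assms] det_mul by metis
  moreover have "det (msqrt A) \<noteq> 0"
    using pos_def_invertible[OF pos_def_msqrt[OF assms]] invertible_det_nz by blast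
  ultimately show ?thesis by (metis not_real_square_gt_zero)
qed

section \<open>Partial derivatives\<close>

lemma pd_eq_derivative: "(f has_derivative D) (at x) \<Longrightarrow> pd i f x = D (axis i 1)"
  unfolding pd_def using frechet_derivative_at by metis

lemma has_derivative_frechet:
  "f differentiable (at x) \<Longrightarrow> (f has_derivative frechet_derivative f (at x)) (at x)"
  using frechet_derivative_works by blast

lemma pd_cong_open:
  assumes "open U" "x \<in> U" "\<And>z. z \<in> U \<Longrightarrow> f z = g z"
  shows "pd i f x = pd i g x"
proof -
  have "(f has_derivative D) (at x) \<longleftrightarrow> (g has_derivative D) (at x)" for D
    using has_derivative_transform_within_open[OF _ assms(1,2), of f D UNIV g]
      has_derivative_transform_within_open[OF _ assms(1,2), of g D UNIV f] assms(3) by auto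
  then show ?thesis unfolding pd_def frechet_derivative_def by simp
qed

lemma differentiable_cong_open:
  assumes "f differentiable (at x)" "open U" "x \<in> U" "\<And>z. z \<in> U \<Longrightarrow> f z = g z"
  shows "g differentiable (at x)"
  using assms has_derivative_transform_within_open unfolding differentiable_def by blast

lemma pd_const [simp]: "pd i (\<lambda>z. c) x = 0"
  by (rule pd_eq_derivative[where D="\<lambda>h. 0", simplified]) simp

lemma pd_add:
  fixes f g :: "real^'n::finite \<Rightarrow> real"
  assumes "f differentiable (at x)" "g differentiable (at x)"
  shows "pd i (\<lambda>z. f z + g z) x = pd i f x + pd i g x"
  using pd_eq_derivative[OF has_derivative_add[OF assms[THEN has_derivative_frechet]]]
  by (simp add: pd_def)

lemma pd_mult:
  fixes f g :: "real^'n::finite \<Rightarrow> real"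
  assumes "f differentiable (at x)" "g differentiable (at x)"
  shows "pd i (\<lambda>z. f z * g z) x = pd i f x * g x + f x * pd i g x"
  using pd_eq_derivative[OF has_derivative_mult[OF assms[THEN has_derivative_frechet]]]
  by (simp add: pd_def)

lemma pd_sum:
  fixes f :: "'a \<Rightarrow> real^'n::finite \<Rightarrow> real"
  assumes "finite S" "\<And>j. j \<in> S \<Longrightarrow> f j differentiable (at x)"
  shows "pd i (\<lambda>z. \<Sum>j\<in>S. f j z) x = (\<Sum>j\<in>S. pd i (f j) x)"
  using pd_eq_derivative[OF has_derivative_sum[of S f, OF has_derivative_frechet[OF assms(2)]]]
  by (simp add: pd_def)

lemma pd_cmult:
  fixes f :: "real^'n::finite \<Rightarrow> real"
  assumes "f differentiable (at x)"
  shows "pd i (\<lambda>z. c * f z) x = c * pd i f x"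
  using pd_mult[OF differentiable_const assms] by simp

lemma pd_minus:
  fixes f :: "real^'n::finite \<Rightarrow> real"
  assumes "f differentiable (at x)"
  shows "pd i (\<lambda>z. - f z) x = - pd i f x"
  using pd_cmult[OF assms, where c="-1"] by simp

lemma pd_ln_powr_half:
  fixes f :: "real^'n::finite \<Rightarrow> real"
  assumes "f differentiable (at x)" "0 < f x"
  shows "pd i (\<lambda>z. ln (f z powr (1/2))) x = pd i f x / (2 * f x)"
proof -
  have hd: "((\<lambda>z. (1/2) * ln (f z)) has_derivative
      (\<lambda>h. (1/2) * (frechet_derivative f (at x) h * inverse (f x)))) (at x)"
    by (intro has_derivative_mult_right
        DERIV_compose_FDERIV[where g=f, OF DERIV_ln[OF assms(2)] has_derivative_frechet[OF assms(1)]])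
  have "(\<lambda>z. ln (f z powr (1/2))) = (\<lambda>z. (1/2) * ln (f z))"
    by (simp add: ln_powr)
  then have "pd i (\<lambda>z. ln (f z powr (1/2))) x = (1/2) * (frechet_derivative f (at x) (axis i 1) * inverse (f x))"
    using pd_eq_derivative[OF hd] by simp
  also have "\<dots> = pd i f x / (2 * f x)"
    using assms(2) by (simp add: pd_def field_simps)
  finally show ?thesis .
qed

lemma has_derivative_along_line:
  fixes f :: "real^'n::finite \<Rightarrow> real"
  assumes "f differentiable (at (p + s *\<^sub>R u))"
  shows "((\<lambda>t. f (p + t *\<^sub>R u)) has_derivative (\<lambda>h. h * frechet_derivative f (at (p + s *\<^sub>R u)) u))
    (at s within X)"
proof -
  have "((\<lambda>t. p + t *\<^sub>R u) has_derivative (\<lambda>h. h *\<^sub>R u)) (at s within X)"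
    by (intro derivative_eq_intros) auto
  moreover have d: "(f has_derivative frechet_derivative f (at (p + s *\<^sub>R u))) (at (p + s *\<^sub>R u))"
    using assms by (rule has_derivative_frechet)
  ultimately show ?thesis
    using has_derivative_compose linear.scaleR[OF has_derivative_linear[OF d]] by fastforce
qed

definition second_difference :: "(real^'n::finite \<Rightarrow> real) \<Rightarrow> 'n \<Rightarrow> 'n \<Rightarrow> real^'n \<Rightarrow> real \<Rightarrow> real" where
  "second_difference g k j y t =
     g (y + t *\<^sub>R axis k 1 + t *\<^sub>R axis j 1) - g (y + t *\<^sub>R axis k 1) - g (y + t *\<^sub>R axis j 1) + g y"

lemma second_difference_commute: "second_difference g k j y t = second_difference g j k y t"
  by (simp add: second_difference_def add.assoc add.commute[of "t *\<^sub>R axis k 1"])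

lemma second_difference_mvt:
  fixes g :: "real^'n::finite \<Rightarrow> real" and j k :: 'n
  defines "ek \<equiv> axis k (1::real)" and "ej \<equiv> axis j (1::real)"
  assumes t: "0 < t"
    and inU: "\<And>s r. 0 \<le> s \<Longrightarrow> s \<le> t \<Longrightarrow> 0 \<le> r \<Longrightarrow> r \<le> t \<Longrightarrow> y + s *\<^sub>R ek + r *\<^sub>R ej \<in> U"
    and dg: "\<forall>z\<in>U. g differentiable (at z)"
    and dk: "\<forall>z\<in>U. pd k g differentiable (at z)"
  shows "\<exists>s r. 0 < s \<and> s < t \<and> 0 < r \<and> r < t \<and>
     second_difference g k j y t = t * t * pd j (pd k g) (y + s *\<^sub>R ek + r *\<^sub>R ej)"
proof -
  define \<phi> where "\<phi> s = g ((y + t *\<^sub>R ej) + s *\<^sub>R ek) - g (y + s *\<^sub>R ek)" for s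
  have shift: "(y + t *\<^sub>R ej) + s *\<^sub>R ek = y + s *\<^sub>R ek + t *\<^sub>R ej" for s
    by (simp add: algebra_simps)
  have "(\<phi> has_derivative (\<lambda>h. h * (pd k g ((y + t *\<^sub>R ej) + s *\<^sub>R ek) - pd k g (y + s *\<^sub>R ek))))
      (at s within {0..t})" if "0 \<le> s" "s \<le> t" for s
  proof -
    have "g differentiable (at ((y + t *\<^sub>R ej) + s *\<^sub>R ek))"
      using dg inU[of s t] that t unfolding shift by auto
    moreover have "g differentiable (at (y + s *\<^sub>R ek))"
      using dg inU[of s 0] that t by auto
    ultimately show ?thesis
      unfolding \<phi>_def using has_derivative_diff[OF has_derivative_along_line has_derivative_along_line]
      by (simp add: pd_def ek_def right_diff_distrib)
  qed
  from mvt_simple[OF t this] obtain s where s: "s \<in> {0<..<t}"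
    and es: "\<phi> t - \<phi> 0 = t * (pd k g ((y + t *\<^sub>R ej) + s *\<^sub>R ek) - pd k g (y + s *\<^sub>R ek))"
    by auto
  define \<psi> where "\<psi> r = pd k g ((y + s *\<^sub>R ek) + r *\<^sub>R ej)" for r
  have "(\<psi> has_derivative (\<lambda>h. h * pd j (pd k g) ((y + s *\<^sub>R ek) + r *\<^sub>R ej))) (at r within {0..t})"
    if "0 \<le> r" "r \<le> t" for r
  proof -
    have "pd k g differentiable (at ((y + s *\<^sub>R ek) + r *\<^sub>R ej))"
      using dk inU[of s r] s that by auto
    then show ?thesis
      unfolding \<psi>_def using has_derivative_along_line by (simp add: pd_def[of j] ej_def)
  qed
  from mvt_simple[OF t this] obtain r where r: "r \<in> {0<..<t}"
    and er: "\<psi> t - \<psi> 0 = t * pd j (pd k g) ((y + s *\<^sub>R ek) + r *\<^sub>R ej)"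
    by auto
  have "second_difference g k j y t = \<phi> t - \<phi> 0"
    unfolding second_difference_def \<phi>_def ek_def ej_def by (simp add: algebra_simps)
  also have "\<dots> = t * (\<psi> t - \<psi> 0)" using es unfolding \<psi>_def by (simp add: shift)
  also have "\<dots> = t * t * pd j (pd k g) (y + s *\<^sub>R ek + r *\<^sub>R ej)" using er by simp
  finally show ?thesis using s r by auto
qed

lemma second_difference_approx:
  fixes g :: "real^'n::finite \<Rightarrow> real"
  assumes U: "open U" and y: "y \<in> U"
    and dg: "\<forall>z\<in>U. g differentiable (at z)" and dk: "\<forall>z\<in>U. pd k g differentiable (at z)"
    and cont: "continuous (at y) (pd j (pd k g))" and e: "0 < e"
  shows "\<exists>d>0. \<forall>t. 0 < t \<and> t < d \<longrightarrow>
    \<bar>second_difference g k j y t - t * t * pd j (pd k g) y\<bar> \<le> e * (t * t)"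
proof -
  obtain r where r: "0 < r" "ball y r \<subseteq> U" using U y open_contains_ball by blast
  obtain d1 where d1: "0 < d1" "\<And>z. dist z y < d1 \<Longrightarrow> dist (pd j (pd k g) z) (pd j (pd k g) y) < e"
    using cont e unfolding continuous_at_eps_delta by blast
  define d where "d = min r d1 / 2"
  have near: "dist (y + s *\<^sub>R axis k 1 + q *\<^sub>R axis j 1) y < min r d1"
    if "0 \<le> s" "s \<le> t" "0 \<le> q" "q \<le> t" "t < d" for s q t
  proof -
    have "dist (y + s *\<^sub>R axis k 1 + q *\<^sub>R axis j 1) y = norm (s *\<^sub>R axis k (1::real) + q *\<^sub>R (axis j 1 :: real^'n))"
      by (simp add: dist_norm)
    also have "\<dots> \<le> s + q"
      using norm_triangle_ineq[of "s *\<^sub>R axis k (1::real)" "q *\<^sub>R (axis j 1 :: real^'n)"] that by simp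
    also have "\<dots> < min r d1" using that unfolding d_def by linarith
    finally show ?thesis .
  qed
  show ?thesis
  proof (intro exI[of _ d] conjI allI impI)
    show "0 < d" using r d1 by (simp add: d_def)
    fix t assume t: "0 < t \<and> t < d"
    have "y + s *\<^sub>R axis k 1 + q *\<^sub>R axis j 1 \<in> U" if "0 \<le> s" "s \<le> t" "0 \<le> q" "q \<le> t" for s q
      using near[OF that] t r(2) by (auto simp: dist_commute subset_iff)
    with second_difference_mvt[of t y k j U g] t dg dk obtain s q where sq: "0 < s" "s < t" "0 < q" "q < t"
      and eq: "second_difference g k j y t = t * t * pd j (pd k g) (y + s *\<^sub>R axis k 1 + q *\<^sub>R axis j 1)"
      by blast
    have "\<bar>pd j (pd k g) (y + s *\<^sub>R axis k 1 + q *\<^sub>R axis j 1) - pd j (pd k g) y\<bar> \<le> e"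
      using d1(2) near[of s t q] sq t unfolding dist_real_def by (simp add: less_imp_le)
    then have "(t * t) * \<bar>pd j (pd k g) (y + s *\<^sub>R axis k 1 + q *\<^sub>R axis j 1) - pd j (pd k g) y\<bar> \<le> (t * t) * e"
      by (simp add: mult_left_mono)
    then show "\<bar>second_difference g k j y t - t * t * pd j (pd k g) y\<bar> \<le> e * (t * t)"
      unfolding eq using t by (simp add: abs_mult right_diff_distrib[symmetric] mult.commute)
  qed
qed

text \<open>Schwarz's theorem: for small t the second difference is close to t^2 times either mixed
  partial at y.\<close>
lemma pd_commute:
  fixes g :: "real^'n::finite \<Rightarrow> real"
  assumes U: "open U" and y: "y \<in> U"
    and dg: "\<forall>z\<in>U. g differentiable (at z)"
    and dk: "\<forall>z\<in>U. pd k g differentiable (at z)"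
    and dj: "\<forall>z\<in>U. pd j g differentiable (at z)"
    and ca: "continuous (at y) (pd j (pd k g))"
    and cb: "continuous (at y) (pd k (pd j g))"
  shows "pd j (pd k g) y = pd k (pd j g) y"
proof -
  have close: "\<bar>pd j (pd k g) y - pd k (pd j g) y\<bar> \<le> 2 * e" if e: "0 < e" for e
  proof -
    obtain d1 where d1: "0 < d1" "\<And>t. 0 < t \<and> t < d1 \<Longrightarrow>
        \<bar>second_difference g k j y t - t * t * pd j (pd k g) y\<bar> \<le> e * (t * t)"
      using second_difference_approx[OF U y dg dk ca e] by blast
    obtain d2 where d2: "0 < d2" "\<And>t. 0 < t \<and> t < d2 \<Longrightarrow>
        \<bar>second_difference g k j y t - t * t * pd k (pd j g) y\<bar> \<le> e * (t * t)"
      using second_difference_approx[OF U y dg dj cb e] second_difference_commute by metis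
    define t where "t = min d1 d2 / 2"
    have t: "0 < t" "t < d1" "t < d2" using d1(1) d2(1) by (auto simp: t_def)
    have "\<bar>second_difference g k j y t - t * t * pd j (pd k g) y\<bar> \<le> e * (t * t)"
      and "\<bar>second_difference g k j y t - t * t * pd k (pd j g) y\<bar> \<le> e * (t * t)"
      using d1(2) d2(2) t by blast+
    then have "\<bar>t * t * pd j (pd k g) y - t * t * pd k (pd j g) y\<bar> \<le> 2 * (e * (t * t))"
      unfolding abs_le_iff by linarith
    moreover have "\<bar>t * t * pd j (pd k g) y - t * t * pd k (pd j g) y\<bar>
        = (t * t) * \<bar>pd j (pd k g) y - pd k (pd j g) y\<bar>"
      by (simp only: right_diff_distrib[symmetric] abs_mult abs_mult_self_eq)
    ultimately have "(t * t) * \<bar>pd j (pd k g) y - pd k (pd j g) y\<bar> \<le> (t * t) * (2 * e)"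
      by (simp add: mult_ac)
    then show ?thesis using t by simp
  qed
  have "\<bar>pd j (pd k g) y - pd k (pd j g) y\<bar> \<le> 0"
  proof (rule field_le_epsilon)
    fix e :: real assume "0 < e"
    then show "\<bar>pd j (pd k g) y - pd k (pd j g) y\<bar> \<le> 0 + e" using close[of "e / 2"] by simp
  qed
  then show ?thesis by simp
qed

section \<open>Matrix-valued functions\<close>

definition matrix_differentiable :: "(real^'n::finite \<Rightarrow> real^'m::finite^'k::finite) \<Rightarrow> real^'n \<Rightarrow> bool" where
  "matrix_differentiable A x \<longleftrightarrow> (\<forall>a b. (\<lambda>z. A z $ a $ b) differentiable (at x))"

definition mpd :: "'n::finite \<Rightarrow> (real^'n \<Rightarrow> real^'m::finite^'k::finite) \<Rightarrow> real^'n \<Rightarrow> real^'m^'k" where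
  "mpd i A x = (\<chi> a b. pd i (\<lambda>z. A z $ a $ b) x)"

lemma matrix_differentiable_const [simp]: "matrix_differentiable (\<lambda>z. C) x"
  by (simp add: matrix_differentiable_def)

lemma mpd_const [simp]: "mpd i (\<lambda>z. C) x = 0"
  by (simp add: mpd_def vec_eq_iff)

lemma matrix_differentiable_add:
  "matrix_differentiable A x \<Longrightarrow> matrix_differentiable B x \<Longrightarrow> matrix_differentiable (\<lambda>z. A z + B z) x"
  by (simp add: matrix_differentiable_def differentiable_add)

lemma mpd_add:
  "matrix_differentiable A x \<Longrightarrow> matrix_differentiable B x \<Longrightarrow> mpd i (\<lambda>z. A z + B z) x = mpd i A x + mpd i B x"
  by (simp add: matrix_differentiable_def mpd_def vec_eq_iff pd_add)

lemma matrix_differentiable_diff: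
  "matrix_differentiable A x \<Longrightarrow> matrix_differentiable B x \<Longrightarrow> matrix_differentiable (\<lambda>z. A z - B z) x"
  by (simp add: matrix_differentiable_def differentiable_diff)

lemma matrix_differentiable_scaleR: "matrix_differentiable A x \<Longrightarrow> matrix_differentiable (\<lambda>z. c *\<^sub>R A z) x"
  by (simp add: matrix_differentiable_def differentiable_mult)

lemma mpd_scaleR: "matrix_differentiable A x \<Longrightarrow> mpd i (\<lambda>z. c *\<^sub>R A z) x = c *\<^sub>R mpd i A x"
  by (simp add: matrix_differentiable_def mpd_def vec_eq_iff pd_cmult)

lemma matrix_differentiable_mult:
  fixes A :: "real^'n::finite \<Rightarrow> real^'m::finite^'k::finite" and B :: "real^'n \<Rightarrow> real^'l::finite^'m"
  assumes "matrix_differentiable A x" "matrix_differentiable B x"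
  shows "matrix_differentiable (\<lambda>z. A z ** B z) x"
  using assms unfolding matrix_differentiable_def matrix_matrix_mult_def
  by (auto intro!: differentiable_sum differentiable_mult)

lemma mpd_mult:
  fixes A :: "real^'n::finite \<Rightarrow> real^'m::finite^'k::finite" and B :: "real^'n \<Rightarrow> real^'l::finite^'m"
  assumes "matrix_differentiable A x" "matrix_differentiable B x"
  shows "mpd i (\<lambda>z. A z ** B z) x = mpd i A x ** B x + A x ** mpd i B x"
proof -
  have "pd i (\<lambda>z. \<Sum>k\<in>UNIV. A z $ a $ k * B z $ k $ b) x =
      (\<Sum>k\<in>UNIV. pd i (\<lambda>z. A z $ a $ k) x * B x $ k $ b + A x $ a $ k * pd i (\<lambda>z. B z $ k $ b) x)" for a b
    using assms unfolding matrix_differentiable_def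
    by (simp add: pd_sum pd_mult differentiable_mult)
  then show ?thesis
    by (simp add: mpd_def vec_eq_iff matrix_matrix_mult_def sum.distrib)
qed

lemma matrix_differentiable_cong_open:
  assumes "matrix_differentiable A x" "open U" "x \<in> U" "\<And>z. z \<in> U \<Longrightarrow> A z = B z"
  shows "matrix_differentiable B x"
  unfolding matrix_differentiable_def
proof (intro allI)
  fix a b
  have "(\<lambda>z. A z $ a $ b) differentiable (at x)"
    using assms(1) unfolding matrix_differentiable_def by blast
  then show "(\<lambda>z. B z $ a $ b) differentiable (at x)"
    by (rule differentiable_cong_open[OF _ assms(2,3)]) (simp add: assms(4))
qed

lemma mpd_cong_open:
  assumes "open U" "x \<in> U" "\<And>z. z \<in> U \<Longrightarrow> A z = B z"
  shows "mpd i A x = mpd i B x"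
proof -
  have "pd i (\<lambda>z. A z $ a $ b) x = pd i (\<lambda>z. B z $ a $ b) x" for a b
    by (rule pd_cong_open[OF assms(1,2)]) (simp add: assms(3))
  then show ?thesis unfolding mpd_def by simp
qed

lemma differentiable_prod:
  fixes f :: "'i \<Rightarrow> 'a::real_normed_vector \<Rightarrow> 'b::real_normed_field"
  assumes "\<And>i. i \<in> I \<Longrightarrow> f i differentiable (at x within S)"
  shows "(\<lambda>x. \<Prod>i\<in>I. f i x) differentiable (at x within S)"
proof -
  have "\<forall>i\<in>I. \<exists>D. (f i has_derivative D) (at x within S)"
    using assms unfolding differentiable_def by blast
  then obtain D where "\<And>i. i \<in> I \<Longrightarrow> (f i has_derivative D i) (at x within S)"
    by (metis bchoice)
  then show ?thesis
    unfolding differentiable_def using has_derivative_prod by blast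
qed

lemma differentiable_det:
  fixes A :: "real^'n::finite \<Rightarrow> real^'m::finite^'m"
  assumes "matrix_differentiable A x"
  shows "(\<lambda>z. det (A z)) differentiable (at x)"
  using assms unfolding det_def matrix_differentiable_def
  by (intro differentiable_sum differentiable_mult differentiable_const) (auto intro!: differentiable_prod)

lemma pd_det_sum_rows:
  fixes A :: "real^'n::finite \<Rightarrow> real^'m::finite^'m"
  assumes "matrix_differentiable A x"
  shows "pd i (\<lambda>z. det (A z)) x = (\<Sum>k\<in>UNIV. det (\<chi> r. if r = k then row k (mpd i A x) else row r (A x)))"
proof -
  let ?P = "{p. p permutes (UNIV::'m set)}"
  define D where "D r c = frechet_derivative (\<lambda>z. A z $ r $ c) (at x)" for r c
  have "((\<lambda>z. A z $ r $ c) has_derivative D r c) (at x)" for r c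
    using assms unfolding matrix_differentiable_def D_def by (simp add: has_derivative_frechet)
  then have "((\<lambda>z. \<Sum>p\<in>?P. of_int (sign p) * (\<Prod>r\<in>UNIV. A z $ r $ p r)) has_derivative
      (\<lambda>h. \<Sum>p\<in>?P. of_int (sign p) * (\<Sum>k\<in>UNIV. D k (p k) h * (\<Prod>r\<in>UNIV - {k}. A x $ r $ p r)))) (at x)"
    by (intro has_derivative_sum has_derivative_mult_right has_derivative_prod)
  moreover have "D r c (axis i 1) = mpd i A x $ r $ c" for r c
    by (simp add: D_def mpd_def pd_def)
  ultimately have "pd i (\<lambda>z. det (A z)) x =
      (\<Sum>p\<in>?P. of_int (sign p) * (\<Sum>k\<in>UNIV. mpd i A x $ k $ p k * (\<Prod>r\<in>UNIV - {k}. A x $ r $ p r)))"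
    unfolding det_def by (simp add: pd_eq_derivative)
  also have "\<dots> = (\<Sum>k\<in>UNIV. \<Sum>p\<in>?P. of_int (sign p) * (mpd i A x $ k $ p k * (\<Prod>r\<in>UNIV - {k}. A x $ r $ p r)))"
    by (subst sum.swap) (simp add: sum_distrib_left)
  also have "\<dots> = (\<Sum>k\<in>UNIV. det (\<chi> r. if r = k then row k (mpd i A x) else row r (A x)))"
  proof (intro sum.cong refl)
    fix k
    have "(\<Prod>r\<in>UNIV. (\<chi> r. if r = k then row k (mpd i A x) else row r (A x)) $ r $ p r) =
        mpd i A x $ k $ p k * (\<Prod>r\<in>UNIV - {k}. A x $ r $ p r)" for p :: "'m \<Rightarrow> 'm"
      by (subst prod.remove[of _ k]) (auto simp: row_def intro!: prod.cong)
    then show "(\<Sum>p\<in>?P. of_int (sign p) * (mpd i A x $ k $ p k * (\<Prod>r\<in>UNIV - {k}. A x $ r $ p r))) =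
        det (\<chi> r. if r = k then row k (mpd i A x) else row r (A x))"
      unfolding det_def by simp
  qed
  finally show ?thesis .
qed

text \<open>Cramer's rule in row form: replacing row k of A by v multiplies det A by the k-th
  coordinate of v in the basis of the rows of A.\<close>
lemma det_replace_row:
  fixes A :: "real^'n::finite^'n"
  assumes "invertible A"
  shows "det (\<chi> r. if r = k then v else row r A) = (v v* matrix_inv A) $ k * det A"
proof -
  define y where "y = v v* matrix_inv A"
  have "(\<Sum>i\<in>UNIV. y $ i *s row i A) = y v* A"
    by (simp add: vec_eq_iff sum_component vector_matrix_mult_def row_def mult.commute)
  also have "\<dots> = v"
    by (simp add: y_def vector_matrix_mul_assoc matrix_inv_left[OF assms])
  finally have "(\<Sum>i\<in>UNIV. y $ i *s row i A) = v" .
  with cramer_lemma_transpose[of k y A] show ?thesis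
    by (simp only: y_def)
qed

lemma pd_det:
  fixes A :: "real^'n::finite \<Rightarrow> real^'m::finite^'m"
  assumes "matrix_differentiable A x" "invertible (A x)"
  shows "pd i (\<lambda>z. det (A z)) x = det (A x) * trace (matrix_inv (A x) ** mpd i A x)"
proof -
  have "pd i (\<lambda>z. det (A z)) x = (\<Sum>k\<in>UNIV. (row k (mpd i A x) v* matrix_inv (A x)) $ k * det (A x))"
    unfolding pd_det_sum_rows[OF assms(1)] det_replace_row[OF assms(2)] ..
  also have "\<dots> = det (A x) * trace (mpd i A x ** matrix_inv (A x))"
    by (simp add: trace_def matrix_matrix_mult_def vector_matrix_mult_def row_def sum_distrib_left
        sum_distrib_right mult.commute)
  also have "\<dots> = det (A x) * trace (matrix_inv (A x) ** mpd i A x)"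
    by (simp only: trace_mul_sym[of "mpd i A x"])
  finally show ?thesis .
qed

lemma matrix_inv_cramer:
  fixes A :: "real^'n::finite^'n"
  assumes "det A \<noteq> 0"
  shows "matrix_inv A $ k $ l = det (\<chi> i j. if j = k then axis l 1 $ i else A $ i $ j) / det A"
proof -
  have "A *v (matrix_inv A *v axis l 1) = axis l 1"
    using assms invertible_det_nz matrix_inv_right
    by (metis matrix_vector_mul_assoc matrix_vector_mul_lid)
  then have "matrix_inv A *v axis l 1 = (\<chi> k. det (\<chi> i j. if j = k then axis l 1 $ i else A $ i $ j) / det A)"
    using cramer[OF assms] by blast
  moreover have "(matrix_inv A *v axis l 1) $ k = matrix_inv A $ k $ l"
    by (simp add: matrix_vector_mult_basis column_def)
  ultimately show ?thesis by simp
qed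

lemma det_nonzero_near:
  fixes A :: "real^'n::finite \<Rightarrow> real^'m::finite^'m"
  assumes "matrix_differentiable A x" "det (A x) \<noteq> 0"
  obtains e where "0 < e" "\<And>z. z \<in> ball x e \<Longrightarrow> det (A z) \<noteq> 0"
proof -
  have "continuous (at x) (\<lambda>z. det (A z))"
    by (rule differentiable_imp_continuous_within[OF differentiable_det[OF assms(1)]])
  from continuous_at_avoid[OF this assms(2)] show ?thesis
    using that by (auto simp: ball_def)
qed

lemma matrix_differentiable_inv:
  fixes A :: "real^'n::finite \<Rightarrow> real^'m::finite^'m"
  assumes "matrix_differentiable A x" "invertible (A x)"
  shows "matrix_differentiable (\<lambda>z. matrix_inv (A z)) x"
  unfolding matrix_differentiable_def
proof (intro allI)
  fix k l
  obtain e where e: "0 < e" "\<And>z. z \<in> ball x e \<Longrightarrow> det (A z) \<noteq> 0"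
    using det_nonzero_near assms invertible_det_nz by metis
  define M where "M z = (\<chi> i j. if j = k then axis l 1 $ i else A z $ i $ j)" for z
  have "(\<lambda>z. M z $ a $ b) differentiable (at x)" for a b
    using assms(1) by (cases "b = k") (simp_all add: M_def matrix_differentiable_def)
  then have "matrix_differentiable M x" by (simp add: matrix_differentiable_def)
  then have "(\<lambda>z. det (M z) / det (A z)) differentiable (at x)"
    using differentiable_det assms(1) e by (intro differentiable_divide) auto
  then show "(\<lambda>z. matrix_inv (A z) $ k $ l) differentiable (at x)"
    by (rule differentiable_cong_open[where U="ball x e"]) (simp_all add: e matrix_inv_cramer M_def)
qed

lemma mpd_inv:
  fixes A :: "real^'n::finite \<Rightarrow> real^'m::finite^'m"
  assumes "matrix_differentiable A x" "invertible (A x)"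
  shows "mpd i (\<lambda>z. matrix_inv (A z)) x = - (matrix_inv (A x) ** mpd i A x ** matrix_inv (A x))"
proof -
  obtain e where e: "0 < e" "\<And>z. z \<in> ball x e \<Longrightarrow> det (A z) \<noteq> 0"
    using det_nonzero_near assms invertible_det_nz by metis
  define W where "W = matrix_inv (A x)"
  define dW where "dW = mpd i (\<lambda>z. matrix_inv (A z)) x"
  have "mpd i (\<lambda>z. A z ** matrix_inv (A z)) x = mpd i (\<lambda>z. mat 1) x"
    by (rule mpd_cong_open[where U="ball x e"]) (simp_all add: e invertible_det_nz matrix_inv_right)
  then have "mpd i A x ** W + A x ** dW = 0"
    unfolding mpd_mult[OF assms(1) matrix_differentiable_inv[OF assms]] W_def dW_def by simp
  then have "W ** (mpd i A x ** W) + (W ** A x) ** dW = 0"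
    by (metis matrix_add_ldistrib matrix_mul_assoc times0_right)
  then have "W ** mpd i A x ** W + dW = 0"
    by (simp add: W_def matrix_inv_left[OF assms(2)] matrix_mul_assoc)
  then show ?thesis unfolding W_def dW_def by (simp add: eq_neg_iff_add_eq_0 add.commute)
qed

section \<open>The matrix Xi\<close>

lemma matrix_mul_right_cancel_inv:
  fixes S :: "'a::field^'n^'n"
  assumes "invertible S"
  shows "A ** S ** matrix_inv S = A" "A ** matrix_inv S ** S = A"
  by (simp_all only: matrix_mul_assoc[symmetric] matrix_inv_right[OF assms] matrix_inv_left[OF assms]
      matrix_mul_rid)

lemma trace_transpose: "trace (transpose A) = trace (A :: 'a::comm_semiring_1^'n^'n)"
  by (simp add: trace_def transpose_def)

lemma trace_minus: "trace (- A) = - trace (A :: 'a::comm_ring_1^'n^'n)"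
  by (simp add: trace_def sum_negf)

lemma trace_symmetric_mult_antisymmetric:
  fixes S Q :: "real^'n::finite^'n"
  assumes "transpose S = S" "transpose Q = - Q"
  shows "trace (S ** Q) = 0"
proof -
  have "trace (S ** Q) = trace (transpose (S ** Q))" by (simp only: trace_transpose)
  also have "\<dots> = - trace (Q ** S)"
    by (simp only: matrix_transpose_mul assms matrix_mul_minus_left trace_minus)
  also have "\<dots> = - trace (S ** Q)" by (simp only: trace_mul_sym[of Q S])
  finally show ?thesis by simp
qed

locale Xi_matrices =
  fixes G F :: "real^'n::finite^'n"
  assumes invertible_G: "invertible G" and symmetric_G: "transpose G = G"
    and antisymmetric_F: "transpose F = - F"
    and invertible_Xi: "invertible (Xi G F)"
begin

abbreviation "K \<equiv> matrix_inv G"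
abbreviation "X \<equiv> Xi G F"
abbreviation "W \<equiv> matrix_inv (Xi G F)"

lemma X_eq: "X = G + (1/4::real) *\<^sub>R (F ** K ** F)"
  by (simp add: Xi_def)

lemma symmetric_K: "transpose K = K"
  by (rule symmetric_matrix_inv[OF invertible_G symmetric_G])

lemma symmetric_X: "transpose X = X"
  unfolding X_eq
  by (simp add: transpose_add transpose_scalar matrix_transpose_mul symmetric_G symmetric_K
      antisymmetric_F matrix_mul_minus_left matrix_mul_minus_right matrix_mul_assoc)

lemma symmetric_W: "transpose W = W"
  by (rule symmetric_matrix_inv[OF invertible_Xi symmetric_X])

text \<open>Both F ** K ** X and X ** K ** F equal F + 1/4 F K F K F.\<close>
lemma W_F_K_commute: "W ** F ** K = K ** F ** W"
proof -
  have "F ** K ** X = X ** K ** F"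
    unfolding X_eq
    by (simp only: matrix_add_ldistrib matrix_add_rdistrib matrix_scalar_ac scalar_matrix_assoc[symmetric]
        matrix_mul_assoc matrix_mul_right_cancel_inv[OF invertible_G] matrix_inv_right[OF invertible_G]
        matrix_mul_lid)
  then have "W ** (F ** K ** X) ** W = W ** (X ** K ** F) ** W" by simp
  then show ?thesis
    by (simp only: matrix_mul_assoc matrix_mul_right_cancel_inv[OF invertible_Xi]
        matrix_inv_left[OF invertible_Xi] matrix_mul_lid)
qed

lemma K_eq: "K = W + (1/4::real) *\<^sub>R (K ** F ** W ** F ** K)"
proof -
  have "K = K ** (X ** W)" by (simp add: matrix_inv_right[OF invertible_Xi])
  also have "\<dots> = W + (1/4::real) *\<^sub>R (K ** F ** K ** F ** W)"
    unfolding X_eq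
    by (simp only: matrix_add_ldistrib matrix_add_rdistrib matrix_scalar_ac scalar_matrix_assoc[symmetric]
        matrix_mul_assoc matrix_inv_left[OF invertible_G] matrix_mul_lid)
  also have "K ** F ** K ** F ** W = (K ** F) ** (K ** F ** W)" by (simp only: matrix_mul_assoc)
  also have "\<dots> = (K ** F) ** (W ** F ** K)" by (simp only: W_F_K_commute)
  also have "\<dots> = K ** F ** W ** F ** K" by (simp only: matrix_mul_assoc)
  finally show ?thesis .
qed

text \<open>With T = mpd j G the left side is the derivative of log det (G ** Xi G F), by Jacobi's formula.\<close>
lemma trace_log_det_derivative:
  "trace (matrix_inv (G ** X) ** (T ** X + G ** (T - (1/4::real) *\<^sub>R (F ** K ** T ** K ** F))))
    = 2 * trace (W ** T)"
proof -
  define c :: real where "c = 1/4"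
  have "trace (W ** K ** T ** X) = trace (X ** (W ** K ** T))"
    by (rule trace_mul_sym)
  also have "\<dots> = trace (K ** T)"
    by (simp only: matrix_mul_assoc matrix_inv_right[OF invertible_Xi] matrix_mul_lid)
  also have "\<dots> = trace (W ** T) + c * trace (K ** F ** W ** F ** K ** T)"
    by (subst K_eq) (simp only: matrix_add_rdistrib trace_add scalar_matrix_assoc[symmetric] trace_scaleR c_def)
  finally have t1: "trace (W ** K ** T ** X) = trace (W ** T) + c * trace (K ** F ** W ** F ** K ** T)" .
  have "trace (W ** F ** K ** T ** K ** F) = trace ((W ** F ** K ** T) ** (K ** F))"
    by (simp only: matrix_mul_assoc)
  also have "\<dots> = trace ((K ** F) ** (W ** F ** K ** T))"
    by (rule trace_mul_sym)
  also have "\<dots> = trace (K ** F ** W ** F ** K ** T)"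
    by (simp only: matrix_mul_assoc)
  finally have "trace (W ** K ** G ** (T - c *\<^sub>R (F ** K ** T ** K ** F)))
      = trace (W ** T) - c * trace (K ** F ** W ** F ** K ** T)"
    by (simp only: matrix_mul_right_cancel_inv(2)[OF invertible_G] matrix_diff_ldistrib trace_sub
        matrix_scalar_ac scalar_matrix_assoc[symmetric] trace_scaleR matrix_mul_assoc)
  moreover have "matrix_inv (G ** X) = W ** K"
    by (rule matrix_inv_mult[OF invertible_G invertible_Xi])
  ultimately show ?thesis
    using t1 unfolding c_def[symmetric]
    by (simp only: matrix_add_ldistrib trace_add matrix_mul_assoc)
qed

text \<open>T is totally symmetric while K ** F ** W is antisymmetric.\<close>
lemma sum_Xi_derivative_mult_W:
  fixes T :: "'n \<Rightarrow> real^'n^'n"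
  assumes T_swap: "\<And>j k l. T j $ k $ l = T k $ j $ l" and T_sym: "\<And>j. transpose (T j) = T j"
  shows "(\<Sum>j\<in>UNIV. ((T j - (1/4::real) *\<^sub>R (F ** K ** T j ** K ** F)) ** W) $ k $ j) = trace (W ** T k)"
proof -
  have contract: "(\<Sum>j\<in>UNIV. (T j ** M) $ b $ j) = trace (T b ** M)" for b and M :: "real^'n^'n"
    by (simp add: trace_def matrix_matrix_mult_def T_swap[of _ b])
  define Q where "Q = K ** F ** W"
  have "transpose Q = W ** (- F) ** K" unfolding Q_def
    by (simp only: matrix_transpose_mul symmetric_W symmetric_K antisymmetric_F matrix_mul_assoc)
  then have "transpose Q = - Q"
    by (simp only: matrix_mul_minus_left matrix_mul_minus_right W_F_K_commute Q_def)
  then have "(\<Sum>j\<in>UNIV. (T j ** Q) $ b $ j) = 0" for b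
    by (simp only: contract trace_symmetric_mult_antisymmetric[OF T_sym])
  then have "(\<Sum>b\<in>UNIV. (F ** K) $ k $ b * (\<Sum>j\<in>UNIV. (T j ** Q) $ b $ j)) = 0"
    by simp
  then have "(\<Sum>j\<in>UNIV. ((F ** K) ** (T j ** Q)) $ k $ j) = 0"
    by (simp only: matrix_matrix_mult_def[of "F ** K"] vec_lambda_beta sum_distrib_left)
      (subst sum.swap, assumption)
  moreover have "(T j - (1/4::real) *\<^sub>R (F ** K ** T j ** K ** F)) ** W
      = T j ** W - (1/4::real) *\<^sub>R ((F ** K) ** (T j ** Q))" for j
    unfolding Q_def by (simp only: matrix_diff_rdistrib scalar_matrix_assoc[symmetric] matrix_mul_assoc)
  ultimately show ?thesis
    by (simp add: sum_subtractf sum_divide_distrib[symmetric] contract trace_mul_sym[of "T k"])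
qed

lemma Xi_inv_derivative_divergence:
  fixes T :: "'n \<Rightarrow> real^'n^'n"
  assumes "\<And>j k l. T j $ k $ l = T k $ j $ l" "\<And>j. transpose (T j) = T j"
  shows "(\<Sum>j\<in>UNIV. (W ** (T j - (1/4::real) *\<^sub>R (F ** K ** T j ** K ** F)) ** W) $ i $ j)
    = (\<Sum>j\<in>UNIV. trace (W ** T j) * W $ i $ j)"
proof -
  define dX where "dX j = T j - (1/4::real) *\<^sub>R (F ** K ** T j ** K ** F)" for j
  have "(\<Sum>j\<in>UNIV. (W ** dX j ** W) $ i $ j) = (\<Sum>j\<in>UNIV. (W ** (dX j ** W)) $ i $ j)"
    by (simp only: matrix_mul_assoc)
  also have "\<dots> = (\<Sum>j\<in>UNIV. \<Sum>k\<in>UNIV. W $ i $ k * (dX j ** W) $ k $ j)"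
    by (simp only: matrix_matrix_mult_def[of W] vec_lambda_beta)
  also have "\<dots> = (\<Sum>k\<in>UNIV. W $ i $ k * (\<Sum>j\<in>UNIV. (dX j ** W) $ k $ j))"
    by (subst sum.swap) (simp only: sum_distrib_left)
  also have "\<dots> = (\<Sum>k\<in>UNIV. trace (W ** T k) * W $ i $ k)"
    by (simp add: dX_def sum_Xi_derivative_mult_W[OF assms] mult.commute)
  finally show ?thesis unfolding dX_def .
qed

end

lemma Xi_eq_msqrt_sandwich:
  fixes G F :: "real^'n::finite^'n"
  defines "R \<equiv> matrix_inv (msqrt G)"
  assumes "pos_def G"
  shows "Xi G F = msqrt G ** (mat 1 + (1/4::real) *\<^sub>R ((R ** F ** R) ** (R ** F ** R))) ** msqrt G"
proof -
  define S where "S = msqrt G"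
  have SS: "S ** S = G" and "invertible S"
    using msqrt_mult_self[OF assms(2)] pos_def_invertible[OF pos_def_msqrt[OF assms(2)]] by (simp_all add: S_def)
  then have RR: "A ** matrix_inv S ** matrix_inv S = A ** matrix_inv G" for A :: "real^'n^'n"
    by (simp only: matrix_mul_assoc[symmetric] matrix_inv_mult[symmetric] SS)
  have "S ** (mat 1 + (1/4::real) *\<^sub>R ((R ** F ** R) ** (R ** F ** R))) ** S
      = S ** S + (1/4::real) *\<^sub>R (S ** R ** F ** R ** R ** F ** R ** S)"
    by (simp only: matrix_add_ldistrib matrix_add_rdistrib matrix_scalar_ac scalar_matrix_assoc[symmetric]
        matrix_mul_rid matrix_mul_assoc)
  also have "\<dots> = G + (1/4::real) *\<^sub>R (F ** matrix_inv G ** F)"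
    using \<open>invertible S\<close>
    by (simp only: SS R_def S_def[symmetric] matrix_inv_right matrix_mul_lid matrix_mul_right_cancel_inv RR)
  finally show ?thesis by (simp add: Xi_def S_def)
qed

lemma det_Xi_pos:
  fixes G F :: "real^'n::finite^'n"
  defines "R \<equiv> matrix_inv (msqrt G)"
  assumes "pos_def G" "pos_def (mat 1 + (1/4::real) *\<^sub>R ((R ** F ** R) ** (R ** F ** R)))"
  shows "0 < det (Xi G F)"
  unfolding Xi_eq_msqrt_sandwich[OF assms(2)] det_mul R_def[symmetric]
  using pos_def_det_pos[OF pos_def_msqrt[OF assms(2)]] pos_def_det_pos[OF assms(3)] by simp

section \<open>Toric generalized Kahler structures of symplectic type\<close>

locale toric_gk_symplectic_type =
  fixes tau :: "real^'n::finite \<Rightarrow> real" and F :: "real^'n^'n" and U :: "(real^'n) set"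
  assumes open_U: "open U"
    and differentiable_iter_pd: "\<And>is z. z \<in> U \<Longrightarrow> iter_pd is tau differentiable (at z)"
    and pos_def_hessian: "\<And>z. z \<in> U \<Longrightarrow> pos_def (hessian tau z)"
    and antisymmetric_F: "transpose F = - F"
    and pos_def_normalized_Xi: "\<And>z. z \<in> U \<Longrightarrow> pos_def (mat 1 + (1/4::real) *\<^sub>R
             ((matrix_inv (msqrt (hessian tau z)) ** F ** matrix_inv (msqrt (hessian tau z)))
            ** (matrix_inv (msqrt (hessian tau z)) ** F ** matrix_inv (msqrt (hessian tau z)))))"
begin

lemma invertible_hessian: "z \<in> U \<Longrightarrow> invertible (hessian tau z)"
  by (rule pos_def_invertible[OF pos_def_hessian])

lemma symmetric_hessian: "z \<in> U \<Longrightarrow> transpose (hessian tau z) = hessian tau z"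
  using pos_def_hessian unfolding pos_def_def by blast

lemma det_Xi_hessian_pos: "z \<in> U \<Longrightarrow> 0 < det (Xi (hessian tau z) F)"
  by (rule det_Xi_pos[OF pos_def_hessian pos_def_normalized_Xi])

lemma invertible_Xi_hessian: "z \<in> U \<Longrightarrow> invertible (Xi (hessian tau z) F)"
  using det_Xi_hessian_pos invertible_det_nz by force

lemma Xi_matrices_at: "z \<in> U \<Longrightarrow> Xi_matrices (hessian tau z) F"
  by unfold_locales (simp_all add: invertible_hessian symmetric_hessian antisymmetric_F invertible_Xi_hessian)

lemma det_hessian_mult_Xi_pos: "z \<in> U \<Longrightarrow> 0 < det (hessian tau z ** Xi (hessian tau z) F)"
  by (simp add: det_mul pos_def_det_pos[OF pos_def_hessian] det_Xi_hessian_pos)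

lemma hessian_entry: "(\<lambda>z. hessian tau z $ k $ l) = iter_pd [k, l] tau"
  by (simp add: hessian_def fun_eq_iff)

lemma mpd_hessian_entry: "(\<lambda>z. mpd j (hessian tau) z $ k $ l) = iter_pd [j, k, l] tau"
  by (simp add: mpd_def hessian_def fun_eq_iff)

lemma matrix_differentiable_hessian: "z \<in> U \<Longrightarrow> matrix_differentiable (hessian tau) z"
  by (simp only: matrix_differentiable_def hessian_entry differentiable_iter_pd simp_thms)

lemma matrix_differentiable_mpd_hessian: "z \<in> U \<Longrightarrow> matrix_differentiable (mpd j (hessian tau)) z"
  by (simp only: matrix_differentiable_def mpd_hessian_entry differentiable_iter_pd simp_thms)

lemma third_derivative_swap: "z \<in> U \<Longrightarrow> mpd j (hessian tau) z $ k $ l = mpd k (hessian tau) z $ j $ l"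
proof -
  assume z: "z \<in> U"
  have "pd j (pd k (pd l tau)) z = pd k (pd j (pd l tau)) z"
  proof (rule pd_commute[OF open_U z])
    show "\<forall>z\<in>U. pd l tau differentiable at z"
      using differentiable_iter_pd[of _ "[l]"] by simp
    show "\<forall>z\<in>U. pd k (pd l tau) differentiable at z"
      using differentiable_iter_pd[of _ "[k, l]"] by simp
    show "\<forall>z\<in>U. pd j (pd l tau) differentiable at z"
      using differentiable_iter_pd[of _ "[j, l]"] by simp
    show "continuous (at z) (pd j (pd k (pd l tau)))"
      using differentiable_imp_continuous_within[OF differentiable_iter_pd[OF z, of "[j, k, l]"]] by simp
    show "continuous (at z) (pd k (pd j (pd l tau)))"
      using differentiable_imp_continuous_within[OF differentiable_iter_pd[OF z, of "[k, j, l]"]] by simp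
  qed
  then show ?thesis
    using fun_cong[OF mpd_hessian_entry[of j k l], of z] fun_cong[OF mpd_hessian_entry[of k j l], of z]
    by simp
qed

lemma symmetric_mpd_hessian: "z \<in> U \<Longrightarrow> transpose (mpd j (hessian tau) z) = mpd j (hessian tau) z"
proof -
  assume z: "z \<in> U"
  have "transpose (mpd j (hessian tau) z) = mpd j (\<lambda>y. transpose (hessian tau y)) z"
    by (simp add: vec_eq_iff mpd_def transpose_def)
  also have "\<dots> = mpd j (hessian tau) z"
    by (rule mpd_cong_open[OF open_U z]) (rule symmetric_hessian)
  finally show ?thesis .
qed

lemma matrix_differentiable_inv_hessian:
  "z \<in> U \<Longrightarrow> matrix_differentiable (\<lambda>z. matrix_inv (hessian tau z)) z"
  by (rule matrix_differentiable_inv[OF matrix_differentiable_hessian invertible_hessian])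

lemma mpd_inv_hessian:
  "z \<in> U \<Longrightarrow> mpd j (\<lambda>z. matrix_inv (hessian tau z)) z
    = - (matrix_inv (hessian tau z) ** mpd j (hessian tau) z ** matrix_inv (hessian tau z))"
  by (rule mpd_inv[OF matrix_differentiable_hessian invertible_hessian])

lemma Xi_hessian_eq: "(\<lambda>z. Xi (hessian tau z) F)
    = (\<lambda>z. hessian tau z + (1/4::real) *\<^sub>R (F ** matrix_inv (hessian tau z) ** F))"
  by (simp add: Xi_def)

lemma matrix_differentiable_Xi: "z \<in> U \<Longrightarrow> matrix_differentiable (\<lambda>z. Xi (hessian tau z) F) z"
  unfolding Xi_hessian_eq
  by (intro matrix_differentiable_add matrix_differentiable_scaleR matrix_differentiable_mult
      matrix_differentiable_const matrix_differentiable_hessian matrix_differentiable_inv_hessian)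

lemma mpd_Xi:
  assumes z: "z \<in> U"
  shows "mpd j (\<lambda>z. Xi (hessian tau z) F) z = mpd j (hessian tau) z
    - (1/4::real) *\<^sub>R (F ** matrix_inv (hessian tau z) ** mpd j (hessian tau) z ** matrix_inv (hessian tau z) ** F)"
proof -
  have K: "matrix_differentiable (\<lambda>z. matrix_inv (hessian tau z)) z"
    by (rule matrix_differentiable_inv_hessian[OF z])
  have FK: "matrix_differentiable (\<lambda>z. F ** matrix_inv (hessian tau z)) z"
    by (intro matrix_differentiable_mult matrix_differentiable_const K)
  have FKF: "matrix_differentiable (\<lambda>z. F ** matrix_inv (hessian tau z) ** F) z"
    by (intro matrix_differentiable_mult matrix_differentiable_const FK)
  have "mpd j (\<lambda>z. F ** matrix_inv (hessian tau z) ** F) z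
      = - (F ** matrix_inv (hessian tau z) ** mpd j (hessian tau) z ** matrix_inv (hessian tau z) ** F)"
    unfolding mpd_mult[OF FK matrix_differentiable_const] mpd_mult[OF matrix_differentiable_const K]
      mpd_inv_hessian[OF z] mpd_const
    by (simp only: times0_left times0_right add_0 add_0_right matrix_mul_minus_left
        matrix_mul_minus_right matrix_mul_assoc)
  then show ?thesis
    unfolding Xi_hessian_eq mpd_add[OF matrix_differentiable_hessian[OF z] matrix_differentiable_scaleR[OF FKF]]
      mpd_scaleR[OF FKF]
    by (simp add: scaleR_minus_right)
qed

lemma matrix_differentiable_Xi_inv:
  "z \<in> U \<Longrightarrow> matrix_differentiable (\<lambda>z. matrix_inv (Xi (hessian tau z) F)) z"
  by (rule matrix_differentiable_inv[OF matrix_differentiable_Xi invertible_Xi_hessian])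

lemma mpd_Xi_inv:
  "z \<in> U \<Longrightarrow> mpd j (\<lambda>z. matrix_inv (Xi (hessian tau z) F)) z
    = - (matrix_inv (Xi (hessian tau z) F) ** mpd j (\<lambda>z. Xi (hessian tau z) F) z
         ** matrix_inv (Xi (hessian tau z) F))"
  by (rule mpd_inv[OF matrix_differentiable_Xi invertible_Xi_hessian])

lemma pd_ln_sqrt_det:
  assumes z: "z \<in> U"
  shows "pd j (\<lambda>z. ln (det (hessian tau z ** Xi (hessian tau z) F) powr (1/2))) z
    = trace (matrix_inv (Xi (hessian tau z) F) ** mpd j (hessian tau) z)"
proof -
  have GX: "matrix_differentiable (\<lambda>z. hessian tau z ** Xi (hessian tau z) F) z"
    by (intro matrix_differentiable_mult matrix_differentiable_hessian matrix_differentiable_Xi z)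
  have "invertible (hessian tau z ** Xi (hessian tau z) F)"
    using det_hessian_mult_Xi_pos[OF z] invertible_det_nz by force
  then show ?thesis
    unfolding pd_ln_powr_half[OF differentiable_det[OF GX] det_hessian_mult_Xi_pos[OF z]]
      pd_det[OF GX \<open>invertible (hessian tau z ** Xi (hessian tau z) F)\<close>] mpd_mult[OF matrix_differentiable_hessian[OF z] matrix_differentiable_Xi[OF z]]
      mpd_Xi[OF z] Xi_matrices.trace_log_det_derivative[OF Xi_matrices_at[OF z]]
    using det_hessian_mult_Xi_pos[OF z] by simp
qed

lemma pd_Xi_inv_entry:
  assumes "z \<in> U"
  shows "pd j (\<lambda>y. matrix_inv (Xi (hessian tau y) F) $ i $ j) z
    = - (matrix_inv (Xi (hessian tau z) F) ** mpd j (\<lambda>z. Xi (hessian tau z) F) z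
         ** matrix_inv (Xi (hessian tau z) F)) $ i $ j"
  using arg_cong[where f="\<lambda>M. M $ i $ j", OF mpd_Xi_inv[OF assms, of j]] by (simp add: mpd_def)

lemma sum_pd_Xi_inv:
  assumes z: "z \<in> U"
  shows "(\<Sum>j\<in>UNIV. pd j (\<lambda>y. matrix_inv (Xi (hessian tau y) F) $ i $ j) z)
    = - (\<Sum>j\<in>UNIV. trace (matrix_inv (Xi (hessian tau z) F) ** mpd j (hessian tau) z)
           * matrix_inv (Xi (hessian tau z) F) $ i $ j)"
proof -
  interpret Xi_matrices "hessian tau z" F by (rule Xi_matrices_at[OF z])
  have "(\<Sum>j\<in>UNIV. pd j (\<lambda>y. matrix_inv (Xi (hessian tau y) F) $ i $ j) z)
      = - (\<Sum>j\<in>UNIV. (W ** (mpd j (hessian tau) z - (1/4::real) *\<^sub>R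
          (F ** K ** mpd j (hessian tau) z ** K ** F)) ** W) $ i $ j)"
    by (simp only: pd_Xi_inv_entry[OF z] mpd_Xi[OF z] sum_negf)
  also have "\<dots> = - (\<Sum>j\<in>UNIV. trace (W ** mpd j (hessian tau) z) * W $ i $ j)"
    by (simp only: Xi_inv_derivative_divergence[OF third_derivative_swap[OF z] symmetric_mpd_hessian[OF z]])
  finally show ?thesis .
qed

lemma matrix_differentiable_mpd_Xi:
  assumes z: "z \<in> U"
  shows "matrix_differentiable (mpd j (\<lambda>z. Xi (hessian tau z) F)) z"
proof (rule matrix_differentiable_cong_open[OF _ open_U z])
  show "matrix_differentiable (\<lambda>y. mpd j (hessian tau) y - (1/4::real) *\<^sub>R
      (F ** matrix_inv (hessian tau y) ** mpd j (hessian tau) y ** matrix_inv (hessian tau y) ** F)) z"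
    by (intro matrix_differentiable_diff matrix_differentiable_scaleR matrix_differentiable_mult
        matrix_differentiable_const matrix_differentiable_mpd_hessian matrix_differentiable_inv_hessian z)
qed (simp add: mpd_Xi)

lemma differentiable_pd_Xi_inv_entry:
  assumes z: "z \<in> U"
  shows "(\<lambda>y. pd j (\<lambda>y. matrix_inv (Xi (hessian tau y) F) $ i $ j) y) differentiable (at z)"
proof -
  have "matrix_differentiable (\<lambda>y. matrix_inv (Xi (hessian tau y) F) ** mpd j (\<lambda>z. Xi (hessian tau z) F) y
      ** matrix_inv (Xi (hessian tau y) F)) z"
    by (intro matrix_differentiable_mult matrix_differentiable_Xi_inv matrix_differentiable_mpd_Xi z)
  then have "(\<lambda>y. - (matrix_inv (Xi (hessian tau y) F) ** mpd j (\<lambda>z. Xi (hessian tau z) F) y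
      ** matrix_inv (Xi (hessian tau y) F)) $ i $ j) differentiable (at z)"
    unfolding matrix_differentiable_def by (intro differentiable_minus) blast
  then show ?thesis
    by (rule differentiable_cong_open[OF _ open_U z]) (simp add: pd_Xi_inv_entry)
qed

lemma differentiable_Xi_inv_entry:
  "z \<in> U \<Longrightarrow> (\<lambda>y. matrix_inv (Xi (hessian tau y) F) $ i $ j) differentiable (at z)"
  using matrix_differentiable_Xi_inv unfolding matrix_differentiable_def by blast

lemma differentiable_trace_Xi_inv_mpd_hessian:
  assumes z: "z \<in> U"
  shows "(\<lambda>y. trace (matrix_inv (Xi (hessian tau y) F) ** mpd j (hessian tau) y)) differentiable (at z)"
proof -
  have "matrix_differentiable (\<lambda>y. matrix_inv (Xi (hessian tau y) F) ** mpd j (hessian tau) y) z"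
    by (intro matrix_differentiable_mult matrix_differentiable_Xi_inv matrix_differentiable_mpd_hessian z)
  then show ?thesis
    unfolding trace_def matrix_differentiable_def by (intro differentiable_sum) auto
qed

theorem scalar_curvature_identity:
  assumes x: "x \<in> U"
  shows "- (\<Sum>i\<in>UNIV. \<Sum>j\<in>UNIV. pd i (pd j (\<lambda>y. matrix_inv (Xi (hessian tau y) F) $ i $ j)) x)
       = (\<Sum>i\<in>UNIV. \<Sum>j\<in>UNIV.
             pd i (\<lambda>y. pd j (\<lambda>z. ln (det (hessian tau z ** Xi (hessian tau z) F) powr (1/2))) y
                       * matrix_inv (Xi (hessian tau y) F) $ i $ j) x)"
proof -
  define D where "D j y = trace (matrix_inv (Xi (hessian tau y) F) ** mpd j (hessian tau) y)" for j y
  define R where "R i y = (\<Sum>j\<in>UNIV. D j y * matrix_inv (Xi (hessian tau y) F) $ i $ j)" for i y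
  have dD: "D j differentiable (at x)" for j
    unfolding D_def by (rule differentiable_trace_Xi_inv_mpd_hessian[OF x])
  have dR: "R i differentiable (at x)" for i
    unfolding R_def using dD differentiable_Xi_inv_entry[OF x]
    by (intro differentiable_sum differentiable_mult) auto
  have lhs: "(\<Sum>j\<in>UNIV. pd i (pd j (\<lambda>y. matrix_inv (Xi (hessian tau y) F) $ i $ j)) x) = - pd i (R i) x" for i
  proof -
    have "(\<Sum>j\<in>UNIV. pd i (pd j (\<lambda>y. matrix_inv (Xi (hessian tau y) F) $ i $ j)) x)
        = pd i (\<lambda>z. \<Sum>j\<in>UNIV. pd j (\<lambda>y. matrix_inv (Xi (hessian tau y) F) $ i $ j) z) x"
      using differentiable_pd_Xi_inv_entry[OF x] by (simp add: pd_sum)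
    also have "\<dots> = pd i (\<lambda>z. - R i z) x"
      by (rule pd_cong_open[OF open_U x]) (simp add: sum_pd_Xi_inv R_def D_def)
    also have "\<dots> = - pd i (R i) x" by (rule pd_minus[OF dR])
    finally show ?thesis .
  qed
  have rhs: "(\<Sum>j\<in>UNIV. pd i (\<lambda>y. pd j (\<lambda>z. ln (det (hessian tau z ** Xi (hessian tau z) F) powr (1/2))) y
      * matrix_inv (Xi (hessian tau y) F) $ i $ j) x) = pd i (R i) x" for i
  proof -
    have "(\<Sum>j\<in>UNIV. pd i (\<lambda>y. pd j (\<lambda>z. ln (det (hessian tau z ** Xi (hessian tau z) F) powr (1/2))) y
        * matrix_inv (Xi (hessian tau y) F) $ i $ j) x)
        = (\<Sum>j\<in>UNIV. pd i (\<lambda>y. D j y * matrix_inv (Xi (hessian tau y) F) $ i $ j) x)"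
      by (intro sum.cong refl pd_cong_open[OF open_U x]) (simp only: pd_ln_sqrt_det D_def)
    also have "\<dots> = pd i (R i) x"
      unfolding R_def using dD differentiable_Xi_inv_entry[OF x]
      by (intro pd_sum[symmetric] differentiable_mult) auto
    finally show ?thesis .
  qed
  show ?thesis by (simp only: lhs rhs sum_negf minus_minus)
qed

end

theorem proposition6p8:
  fixes S :: "(real^'n::finite) set"
    and tau :: "real^'n \<Rightarrow> real"
    and F :: "real^'n^'n"
    and x :: "real^'n"
  assumes "finite S"
    and "interior (convex hull S) \<noteq> {}"
    and "smooth_on tau (interior (convex hull S))"
    and "strictly_convex_on (interior (convex hull S)) tau"
    and "\<forall>y\<in>interior (convex hull S). pos_def (hessian tau y)"
    and "transpose F = - F"
    and "\<forall>y\<in>interior (convex hull S).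
           pos_def (mat 1 + (1/4::real) *\<^sub>R
             ((matrix_inv (msqrt (hessian tau y)) ** F ** matrix_inv (msqrt (hessian tau y)))
            ** (matrix_inv (msqrt (hessian tau y)) ** F ** matrix_inv (msqrt (hessian tau y)))))"
    and "x \<in> interior (convex hull S)"
  shows "- (\<Sum>i\<in>UNIV. \<Sum>j\<in>UNIV.
             pd i (pd j (\<lambda>y. matrix_inv (Xi (hessian tau y) F) $ i $ j)) x)
       = (\<Sum>i\<in>UNIV. \<Sum>j\<in>UNIV.
             pd i (\<lambda>y. pd j (\<lambda>z. ln (det (hessian tau z ** Xi (hessian tau z) F) powr (1/2))) y
                       * matrix_inv (Xi (hessian tau y) F) $ i $ j) x)"
proof -
  interpret toric_gk_symplectic_type tau F "interior (convex hull S)"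
  proof
    show "iter_pd is tau differentiable (at z)" if "z \<in> interior (convex hull S)" for "is" z
      using assms(3) that unfolding smooth_on_def
      by (simp add: differentiable_on_eq_differentiable_at)
  qed (use assms(5-7) in auto)
  show ?thesis by (rule scalar_curvature_identity[OF assms(8)])
qed

end
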